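(* (a) Under the hypotheses of Theorem 4.3 (i.e. $2\le r\le m\le n$, $\mathbf u_1,\dots,\mathbf u_m\in F[t]^n$ of degree at most $k-1$ in $t$, written $\mathbf u_j=\sum_{l=0}^{k-1}\mathbf u_j^{(l)}t^l$, with all $r$-fold wedge products of the $\mathbf u_j$ vanishing modulo $t^k$ and $\mathbf u_1^{(0)}\wedge\dots\wedge\mathbf u_{r-1}^{(0)}\neq0$), for every $w$ with $0\le w<2k$ and every $1\le j_1<\dots<j_{r+1}\le m$, $$\sum_{\substack{l_1+\dots+l_{r+1}=w\\0\le l_i<k}}\mathbf u_{j_1}^{(l_1)}\wedge\dots\wedge\mathbf u_{j_r}^{(l_r)}\wedge\mathbf u_{j_{r+1}}^{(l_{r+1})}=0\quad\text{in }\textstyle\bigwedge^{r+1}F^n.$$ (b) In particular, for $3\le m\le n$ and $k\ge1$, at every point of the Zariski closure $Z_0$ in $\mathcal Z^{m,n}_{2,k}$ of the set of points at which some $x^{(0)}_{i,j}\neq0$, the rows satisfy, for all $0\le w<2k$ and all $1\le j_1<j_2<j_3\le m$, $$\sum_{\substack{l_1+l_2+l_3=w\\0\le l_1,l_2,l_3<k}}\mathbf u_{j_1}^{(l_1)}\wedge\mathbf u_{j_2}^{(l_2)}\wedge\mathbf u_{j_3}^{(l_3)}=0.$$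
   Context: Let $F$ be an algebraically closed field. For integers $1\le r\le m\le n$ and $k\ge 1$, let $S=F[x^{(l)}_{i,j}:1\le i\le m,\ 1\le j\le n,\ 0\le l\le k-1]$, the coordinate ring of $\mathbf A^{mnk}_F$, and let $X(t)$ be the $m\times n$ matrix over $S[t]/(t^k)$ with $(i,j)$ entry $x_{i,j}(t)=\sum_{l=0}^{k-1}x^{(l)}_{i,j}t^l$. $\mathcal I^{m,n}_{r,k}\subseteq S$ is the ideal generated by the coefficients of $t^l$, $0\le l\le k-1$, of all $r\times r$ minors of $X(t)$, and $\mathcal Z^{m,n}_{r,k}\subseteq\mathbf A^{mnk}_F$ is its zero set. For a point of $\mathbf A^{mnk}$, $\mathbf u_i^{(l)}=(x^{(l)}_{i,1},\dots,x^{(l)}_{i,n})\in F^n$ denotes its row of degree $l$. *)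

theory Defs
  imports "HOL-Computational_Algebra.Polynomial" "HOL-Combinatorics.Permutations"
begin

(* Conventions: all indices are 0-based.  A point of A^{mnk} is a function
   x :: nat => nat => nat => 'a, x i j l = x^{(l)}_{i,j}, required to vanish
   outside i<m, j<n, l<k (so that it is determined by its mnk coordinates). *)

definition alg_closed :: "'a::field itself \<Rightarrow> bool" where
  "alg_closed _ \<longleftrightarrow> (\<forall>p::'a poly. degree p > 0 \<longrightarrow> (\<exists>x. poly p x = 0))"

definition incr :: "nat \<Rightarrow> nat \<Rightarrow> (nat \<Rightarrow> nat) \<Rightarrow> bool" where
  "incr p n I \<longleftrightarrow> (\<forall>a<p. I a < n) \<and> (\<forall>a b. a < b \<and> b < p \<longrightarrow> I a < I b)"

definition pdet :: "nat \<Rightarrow> (nat \<Rightarrow> nat \<Rightarrow> 'b::comm_ring_1) \<Rightarrow> (nat \<Rightarrow> nat) \<Rightarrow> 'b" where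
  "pdet p M I = (\<Sum>\<sigma> | \<sigma> permutes {..<p}. of_int (sign \<sigma>) * (\<Prod>a<p. M a (I (\<sigma> a))))"

(* Coordinate of v_0 \<and> ... \<and> v_{p-1} (v a i = i-th component of v_a) on the basis
   vector e_{I 0} \<and> ... \<and> e_{I (p-1)} of \<and>^p F^n (I strictly increasing). *)
definition wedge :: "nat \<Rightarrow> (nat \<Rightarrow> nat \<Rightarrow> 'a::field) \<Rightarrow> (nat \<Rightarrow> nat) \<Rightarrow> 'a" where
  "wedge p v I = pdet p v I"

definition tuples :: "nat \<Rightarrow> nat \<Rightarrow> nat \<Rightarrow> (nat \<Rightarrow> nat) set" where
  "tuples p k w = {l. (\<forall>a<p. l a < k) \<and> (\<forall>a. p \<le> a \<longrightarrow> l a = 0) \<and> (\<Sum>a<p. l a) = w}"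

(* I-coordinate of  sum_{l in tuples} u_{J 0}^{(l_0)} \<and> ... \<and> u_{J(p-1)}^{(l_{p-1})},
   where U j l i = i-th component of u_j^{(l)} *)
definition wedge_sum :: "nat \<Rightarrow> nat \<Rightarrow> (nat \<Rightarrow> nat \<Rightarrow> nat \<Rightarrow> 'a::field) \<Rightarrow> (nat \<Rightarrow> nat) \<Rightarrow> nat \<Rightarrow> (nat \<Rightarrow> nat) \<Rightarrow> 'a" where
  "wedge_sum p k U J w I = (\<Sum>l\<in>tuples p k w. wedge p (\<lambda>a i. U (J a) (l a) i) I)"

(* polynomial vector u_j = sum_{l<k} u_j^{(l)} t^l, i-th component *)
definition upoly :: "nat \<Rightarrow> (nat \<Rightarrow> nat \<Rightarrow> nat \<Rightarrow> 'a::field) \<Rightarrow> nat \<Rightarrow> nat \<Rightarrow> 'a poly" where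
  "upoly k U j i = (\<Sum>l<k. monom (U j l i) l)"

(* all r-fold wedge products u_{J 0} \<and> ... \<and> u_{J(r-1)} (J strictly increasing, < m)
   vanish modulo t^k: every coordinate (an r x r minor) has zero coefficients of t^w, w<k *)
definition wedges_vanish :: "nat \<Rightarrow> nat \<Rightarrow> nat \<Rightarrow> nat \<Rightarrow> (nat \<Rightarrow> nat \<Rightarrow> nat \<Rightarrow> 'a::field) \<Rightarrow> bool" where
  "wedges_vanish r m n k U \<longleftrightarrow>
     (\<forall>J I. incr r m J \<and> incr r n I \<longrightarrow>
        (\<forall>w<k. coeff (pdet r (\<lambda>a i. upoly k U (J a) i) I) w = 0))"

definition aff :: "nat \<Rightarrow> nat \<Rightarrow> nat \<Rightarrow> (nat \<Rightarrow> nat \<Rightarrow> nat \<Rightarrow> 'a::field) set" where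
  "aff m n k = {x. \<forall>i j l. \<not> (i < m \<and> j < n \<and> l < k) \<longrightarrow> x i j l = 0}"

(* Z^{m,n}_{r,k}: coefficients of t^l (l<k) of all r x r minors of X(t) vanish.
   Row i of X(t) has entries x_{i,j}(t) = upoly k (\<lambda>i l j. x i j l) i j. *)
definition Zset :: "nat \<Rightarrow> nat \<Rightarrow> nat \<Rightarrow> nat \<Rightarrow> (nat \<Rightarrow> nat \<Rightarrow> nat \<Rightarrow> 'a::field) set" where
  "Zset m n r k = {x \<in> aff m n k. wedges_vanish r m n k (\<lambda>i l j. x i j l)}"

inductive_set polyfun :: "((nat \<Rightarrow> nat \<Rightarrow> nat \<Rightarrow> 'a::field) \<Rightarrow> 'a) set" where
  pf_const: "(\<lambda>x. c) \<in> polyfun"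
| pf_var: "(\<lambda>x. x i j l) \<in> polyfun"
| pf_add: "f \<in> polyfun \<Longrightarrow> g \<in> polyfun \<Longrightarrow> (\<lambda>x. f x + g x) \<in> polyfun"
| pf_mult: "f \<in> polyfun \<Longrightarrow> g \<in> polyfun \<Longrightarrow> (\<lambda>x. f x * g x) \<in> polyfun"

definition zariski_closure :: "(nat \<Rightarrow> nat \<Rightarrow> nat \<Rightarrow> 'a::field) set \<Rightarrow> (nat \<Rightarrow> nat \<Rightarrow> nat \<Rightarrow> 'a) set \<Rightarrow> (nat \<Rightarrow> nat \<Rightarrow> nat \<Rightarrow> 'a) set" where
  "zariski_closure Y S = {x \<in> Y. \<forall>f\<in>polyfun. (\<forall>y\<in>S. f y = 0) \<longrightarrow> f x = 0}"

definition Z0 :: "nat \<Rightarrow> nat \<Rightarrow> nat \<Rightarrow> (nat \<Rightarrow> nat \<Rightarrow> nat \<Rightarrow> 'a::field) set" where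
  "Z0 m n k = zariski_closure (Zset m n 2 k) {x \<in> Zset m n 2 k. \<exists>i<m. \<exists>j<n. x i j 0 \<noteq> 0}"

end

theory Submission
  imports Defs "Jordan_Normal_Form.Determinant" "HOL-Combinatorics.List_Permutation"
begin

(* Let \<delta>(t) be an (r-1)-minor of u_1, ..., u_{r-1} whose constant term is the nonzero
   wedge u_1^(0) \<and> ... \<and> u_{r-1}^(0).  Expanding the r-minors that border \<delta> along their
   last column, and using that they vanish mod t^k, gives
     \<delta> u_j = \<Sum>_{i<r} \<gamma>_{j,i} u_i + t^k Q_j
   for every row j.  So \<delta>^(r+1) times any (r+1)-minor of the u_j is the determinant of a
   matrix of rank r-1 perturbed by t^k Q; its terms of order 0 and 1 in t^k are determinants
   of matrices of rank at most r, hence vanish, and t^(2k) divides it.  As \<delta> is a unit in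
   F[[t]], t^(2k) divides the (r+1)-minor itself, whose coefficients of t^w are the wedge sums.
   Part (b) is the case r = 2 at points with a nonzero constant entry; it passes to the
   Zariski closure because wedge sums are polynomial in the coordinates. *)

lemma incr_less: "incr p n I \<Longrightarrow> a < p \<Longrightarrow> I a < n"
  unfolding incr_def by blast

lemma pdet_eq_det: "pdet p M I = det (mat p p (\<lambda>(a,b). M a (I b)))"
proof -
  have "det (mat p p (\<lambda>(a,b). M a (I b))) =
    (\<Sum>\<sigma> | \<sigma> permutes {0..<p}. of_int (sign \<sigma>) * (\<Prod>a=0..<p. mat p p (\<lambda>(a,b). M a (I b)) $$ (a, \<sigma> a)))"
    by (rule det_def') simp
  also have "\<dots> = pdet p M I"
    unfolding pdet_def atLeast0LessThan
  proof (intro sum.cong refl arg_cong2[where f="(*)"] prod.cong)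
    fix \<sigma> a assume "\<sigma> \<in> {\<sigma>. \<sigma> permutes {..<p}}" "a \<in> {..<p}"
    hence "\<sigma> a < p" "a < p" using permutes_in_image[of \<sigma> "{..<p}" a] by auto
    thus "mat p p (\<lambda>(a,b). M a (I b)) $$ (a, \<sigma> a) = M a (I (\<sigma> a))" by simp
  qed
  finally show ?thesis by simp
qed

lemma pdet_reindex_cols: "pdet p M I = pdet p (\<lambda>a c. M a (I c)) id"
  unfolding pdet_def by simp

lemma pdet_1: "pdet 1 M I = M 0 (I 0)"
  unfolding pdet_eq_det by (subst det_single) auto

lemma pdet_zero_row:
  assumes "b < p" "\<And>c. M b c = 0"
  shows "pdet p M I = 0"
  unfolding pdet_def
proof (intro sum.neutral ballI)
  fix \<sigma> :: "nat \<Rightarrow> nat"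
  have "(\<Prod>a<p. M a (I (\<sigma> a))) = 0" using assms by (intro prod_zero) auto
  thus "of_int (sign \<sigma>) * (\<Prod>a<p. M a (I (\<sigma> a))) = 0" by simp
qed

lemma pdet_scale_rows:
  assumes "\<And>a c. a < p \<Longrightarrow> c < p \<Longrightarrow> M a c = d * M' a c"
  shows "pdet p M id = d ^ p * pdet p M' id"
  unfolding pdet_def sum_distrib_left id_apply
proof (intro sum.cong refl)
  fix \<sigma> assume "\<sigma> \<in> {\<sigma>. \<sigma> permutes {..<p}}"
  hence \<sigma>: "a < p \<Longrightarrow> \<sigma> a < p" for a using permutes_in_image[of \<sigma> "{..<p}" a] by auto
  have "(\<Prod>a<p. M a (\<sigma> a)) = (\<Prod>a<p. d * M' a (\<sigma> a))"
    by (intro prod.cong refl) (use \<sigma> assms in auto)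
  also have "\<dots> = d ^ p * (\<Prod>a<p. M' a (\<sigma> a))" by (simp add: prod.distrib)
  finally show "of_int (sign \<sigma>) * (\<Prod>a<p. M a (\<sigma> a)) = d ^ p * (of_int (sign \<sigma>) * (\<Prod>a<p. M' a (\<sigma> a)))"
    by simp
qed

lemma pdet_transpose: "pdet p M I = pdet p (\<lambda>b a. M a (I b)) id"
proof -
  have "pdet p M I = det (transpose_mat (mat p p (\<lambda>(a,b). M a (I b))))"
    by (simp add: pdet_eq_det det_transpose[of _ p])
  also have "transpose_mat (mat p p (\<lambda>(a,b). M a (I b))) = mat p p (\<lambda>(b,a). M a (I (id b)))"
    by (rule eq_matI) auto
  finally show ?thesis by (simp add: pdet_eq_det)
qed

lemma pdet_permute_rows:
  assumes "\<pi> permutes {..<p}"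
  shows "pdet p (\<lambda>a. M (\<pi> a)) I = of_int (sign \<pi>) * pdet p M I"
proof -
  have \<pi>: "a < p \<Longrightarrow> \<pi> a < p" for a using permutes_in_image[OF assms, of a] by auto
  have "mat p p (\<lambda>(a,b). M (\<pi> a) (I b)) = mat p p (\<lambda>(a,b). mat p p (\<lambda>(a,b). M a (I b)) $$ (\<pi> a, b))"
    by (rule eq_matI) (auto simp: \<pi>)
  thus ?thesis using assms det_permute_rows[of "mat p p (\<lambda>(a,b). M a (I b))" p \<pi>]
    by (simp add: pdet_eq_det atLeast0LessThan)
qed

lemma pdet_permute_cols:
  assumes "\<pi> permutes {..<p}"
  shows "pdet p M (\<lambda>b. I (\<pi> b)) = of_int (sign \<pi>) * pdet p M I"
  using pdet_permute_rows[OF assms, of "\<lambda>b a. M a (I b)" id]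
  by (subst (1 2) pdet_transpose) simp

lemma pdet_identical_rows:
  assumes "a < p" "a' < p" "a \<noteq> a'" "R a = R a'"
  shows "pdet p (\<lambda>a. M (R a)) I = 0"
  unfolding pdet_eq_det
  by (rule det_identical_rows[of _ p a a']) (use assms in \<open>auto intro!: eq_vecI\<close>)

lemma pdet_identical_cols:
  assumes "b < p" "b' < p" "b \<noteq> b'" "I b = I b'"
  shows "pdet p M I = 0"
  by (subst pdet_transpose, rule pdet_identical_rows[of b p b' I "\<lambda>c a. M a c"]) (use assms in auto)

lemma pdet_low_rank:
  fixes C V :: "nat \<Rightarrow> nat \<Rightarrow> 'b::comm_ring_1"
  assumes "q < p" and M: "\<And>a c. a < p \<Longrightarrow> c < p \<Longrightarrow> M a c = (\<Sum>i<q. C a i * V i c)"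
  shows "pdet p M id = 0"
proof -
  let ?C = "mat p p (\<lambda>(a,i). if i < q then C a i else 0)"
  let ?V = "mat p p (\<lambda>(i,c). if i < q then V i c else 0)"
  have factor: "mat p p (\<lambda>(a,c). M a (id c)) = ?C * ?V"
  proof (rule eq_matI)
    fix a c assume ac: "a < dim_row (?C * ?V)" "c < dim_col (?C * ?V)"
    have "(?C * ?V) $$ (a,c) = (\<Sum>i<p. (if i < q then C a i else 0) * (if i < q then V i c else 0))"
      using ac by (simp add: scalar_prod_def atLeast0LessThan)
    also have "\<dots> = (\<Sum>i\<in>{..<p} \<inter> {..<q}. C a i * V i c)"
      by (subst sum.inter_restrict) (auto intro!: sum.cong)
    also have "{..<p} \<inter> {..<q} = {..<q}" using \<open>q < p\<close> by auto
    finally show "mat p p (\<lambda>(a,c). M a (id c)) $$ (a,c) = (?C * ?V) $$ (a,c)"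
      using ac M by simp
  qed auto
  have "pdet p (\<lambda>i c. if i < q then V i c else 0) id = 0"
    by (rule pdet_zero_row[of "p - 1"]) (use \<open>q < p\<close> in auto)
  hence "det ?V = 0" by (simp add: pdet_eq_det)
  have "pdet p M id = det (?C * ?V)" unfolding pdet_eq_det factor ..
  also have "\<dots> = det ?C * det ?V" by (rule det_mult) auto
  finally show ?thesis using \<open>det ?V = 0\<close> by simp
qed

lemma prod_add_mult_mod_square:
  fixes x y :: "'i \<Rightarrow> 'b::comm_ring_1"
  assumes "finite A"
  shows "s^2 dvd (\<Prod>a\<in>A. x a + s * y a) - (\<Prod>a\<in>A. x a) - s * (\<Sum>b\<in>A. y b * (\<Prod>a\<in>A - {b}. x a))"
  using assms
proof (induction A rule: finite_induct)
  case (insert c A)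
  define X where "X = (\<Prod>a\<in>A. x a)"
  define Z where "Z = (\<Sum>b\<in>A. y b * (\<Prod>a\<in>A - {b}. x a))"
  from insert.IH obtain W where "(\<Prod>a\<in>A. x a + s * y a) - X - s * Z = s^2 * W"
    unfolding X_def Z_def by (auto elim!: dvdE)
  hence W: "(\<Prod>a\<in>A. x a + s * y a) = s^2 * W + s * Z + X"
    by (simp add: diff_eq_eq)
  have "(\<Sum>b\<in>A. y b * (\<Prod>a\<in>insert c A - {b}. x a)) = (\<Sum>b\<in>A. x c * (y b * (\<Prod>a\<in>A - {b}. x a)))"
  proof (intro sum.cong refl)
    fix b assume "b \<in> A"
    hence "insert c A - {b} = insert c (A - {b})" using insert by auto
    thus "y b * (\<Prod>a\<in>insert c A - {b}. x a) = x c * (y b * (\<Prod>a\<in>A - {b}. x a))"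
      using insert by simp
  qed
  hence Z': "(\<Sum>b\<in>insert c A. y b * (\<Prod>a\<in>insert c A - {b}. x a)) = y c * X + x c * Z"
    using insert unfolding X_def Z_def by (simp add: sum_distrib_left insert_Diff_if)
  have X': "(\<Prod>a\<in>insert c A. x a) = x c * X"
    using insert unfolding X_def by simp
  have "(\<Prod>a\<in>insert c A. x a + s * y a) - (\<Prod>a\<in>insert c A. x a)
          - s * (\<Sum>b\<in>insert c A. y b * (\<Prod>a\<in>insert c A - {b}. x a))
        = (x c + s * y c) * (s^2 * W + s * Z + X) - x c * X - s * (y c * X + x c * Z)"
    using insert by (simp add: W X' Z')
  also have "\<dots> = s^2 * (x c * W + y c * Z + s * y c * W)"
    by (simp add: algebra_simps power2_eq_square)
  finally show ?case by simp
qed simp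

lemma pdet_add_mult_mod_square:
  fixes X Y :: "nat \<Rightarrow> nat \<Rightarrow> 'b::comm_ring_1"
  shows "s^2 dvd pdet p (\<lambda>a c. X a c + s * Y a c) id - pdet p X id
            - s * (\<Sum>b<p. pdet p (\<lambda>a c. if a = b then Y a c else X a c) id)"
proof -
  let ?P = "{\<sigma>. \<sigma> permutes {..<p}}"
  let ?T = "\<lambda>\<sigma> b. Y b (\<sigma> b) * (\<Prod>a\<in>{..<p} - {b}. X a (\<sigma> a))"
  have row_replaced: "pdet p (\<lambda>a c. if a = b then Y a c else X a c) id = (\<Sum>\<sigma>\<in>?P. of_int (sign \<sigma>) * ?T \<sigma> b)"
    if "b < p" for b
    unfolding pdet_def id_apply
  proof (intro sum.cong refl arg_cong2[where f="(*)"])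
    fix \<sigma>
    have "(\<Prod>a<p. if a = b then Y a (\<sigma> a) else X a (\<sigma> a)) =
        Y b (\<sigma> b) * (\<Prod>a\<in>{..<p} - {b}. if a = b then Y a (\<sigma> a) else X a (\<sigma> a))"
      using that by (subst prod.remove[of _ b]) auto
    also have "(\<Prod>a\<in>{..<p} - {b}. if a = b then Y a (\<sigma> a) else X a (\<sigma> a)) = (\<Prod>a\<in>{..<p} - {b}. X a (\<sigma> a))"
      by (intro prod.cong) auto
    finally show "(\<Prod>a<p. if a = b then Y a (\<sigma> a) else X a (\<sigma> a)) = ?T \<sigma> b" .
  qed
  have "(\<Sum>b<p. pdet p (\<lambda>a c. if a = b then Y a c else X a c) id) = (\<Sum>b<p. \<Sum>\<sigma>\<in>?P. of_int (sign \<sigma>) * ?T \<sigma> b)"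
    by (intro sum.cong refl row_replaced) simp
  also have "\<dots> = (\<Sum>\<sigma>\<in>?P. of_int (sign \<sigma>) * (\<Sum>b<p. ?T \<sigma> b))"
    by (subst sum.swap) (simp add: sum_distrib_left)
  finally have "pdet p (\<lambda>a c. X a c + s * Y a c) id - pdet p X id
            - s * (\<Sum>b<p. pdet p (\<lambda>a c. if a = b then Y a c else X a c) id) =
        (\<Sum>\<sigma>\<in>?P. of_int (sign \<sigma>) * ((\<Prod>a<p. X a (\<sigma> a) + s * Y a (\<sigma> a)) - (\<Prod>a<p. X a (\<sigma> a))
              - s * (\<Sum>b<p. ?T \<sigma> b)))"
    by (simp add: pdet_def sum_subtractf sum_distrib_left algebra_simps sum.distrib)
  also have "s^2 dvd \<dots>"
    by (intro dvd_sum dvd_mult prod_add_mult_mod_square) auto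
  finally show ?thesis .
qed

lemma square_dvd_pdet_low_rank_add_mult:
  fixes C V Q :: "nat \<Rightarrow> nat \<Rightarrow> 'b::comm_ring_1"
  assumes "q + 2 \<le> p"
  shows "s^2 dvd pdet p (\<lambda>a c. (\<Sum>i<q. C a i * V i c) + s * Q a c) id"
proof -
  let ?X = "\<lambda>a c. \<Sum>i<q. C a i * V i c"
  have "pdet p ?X id = 0" by (rule pdet_low_rank[of q]) (use assms in auto)
  moreover have "pdet p (\<lambda>a c. if a = b then Q a c else ?X a c) id = 0" for b
  \<comment> \<open>replacing one row by Q b adds one vector to the spanning set\<close>
  proof (rule pdet_low_rank[of "Suc q" _ _ "\<lambda>a i. if a = b then (if i = q then 1 else 0) else (if i < q then C a i else 0)"
       "\<lambda>i c. if i = q then Q b c else V i c"])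
    show "Suc q < p" using assms by simp
    fix a c
    show "(if a = b then Q a c else ?X a c) =
      (\<Sum>i<Suc q. (if a = b then (if i = q then 1 else 0) else (if i < q then C a i else 0)) *
          (if i = q then Q b c else V i c))"
      by (auto intro!: sum.cong sum.neutral)
  qed
  ultimately show ?thesis using pdet_add_mult_mod_square[of s p ?X Q] by simp
qed

lemma bordered_minor_expansion:
  fixes u :: "nat \<Rightarrow> nat \<Rightarrow> 'b::comm_ring_1"
  obtains \<gamma> where "\<And>c. pdet (Suc q) (\<lambda>a. u (if a < q then R a else j)) (\<lambda>b. if b < q then C b else c) =
    pdet q (\<lambda>a. u (R a)) C * u j c + (\<Sum>i<q. \<gamma> i * u (R i) c)"
proof -
  define A where "A c = mat (Suc q) (Suc q) (\<lambda>(a,b). u (if a < q then R a else j) (if b < q then C b else c))"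
    for c
  have cofactor_indep: "cofactor (A c) i q = cofactor (A 0) i q" if "i < Suc q" for i c
    unfolding cofactor_def
    by (rule arg_cong[where f="\<lambda>B. _ * det B"], rule eq_matI) (use that in \<open>auto simp: mat_delete_def A_def\<close>)
  have entries: "i < q \<Longrightarrow> A c $$ (i,q) = u (R i) c" "A c $$ (q,q) = u j c" for i c
    by (simp_all add: A_def)
  have cofactor_last: "cofactor (A c) q q = pdet q (\<lambda>a. u (R a)) C" for c
  proof -
    have "mat_delete (A c) q q = mat q q (\<lambda>(a,b). u (R a) (C b))"
      by (rule eq_matI) (auto simp: mat_delete_def A_def)
    thus ?thesis by (simp add: cofactor_def pdet_eq_det)
  qed
  have "pdet (Suc q) (\<lambda>a. u (if a < q then R a else j)) (\<lambda>b. if b < q then C b else c) =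
      pdet q (\<lambda>a. u (R a)) C * u j c + (\<Sum>i<q. cofactor (A 0) i q * u (R i) c)" for c
  proof -
    have "pdet (Suc q) (\<lambda>a. u (if a < q then R a else j)) (\<lambda>b. if b < q then C b else c) = det (A c)"
      unfolding pdet_eq_det A_def by (intro arg_cong[where f=det] eq_matI) auto
    also have "\<dots> = (\<Sum>i<Suc q. A c $$ (i,q) * cofactor (A c) i q)"
      by (rule laplace_expansion_column) (auto simp: A_def)
    also have "\<dots> = (\<Sum>i<q. A c $$ (i,q) * cofactor (A c) i q) + A c $$ (q,q) * cofactor (A c) q q"
      by simp
    also have "\<dots> = (\<Sum>i<q. cofactor (A 0) i q * u (R i) c) + u j c * pdet q (\<lambda>a. u (R a)) C"
      by (intro arg_cong2[where f="(+)"] sum.cong) (simp_all add: entries cofactor_indep[of _ c] cofactor_last)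
    finally show ?thesis by (simp add: algebra_simps)
  qed
  thus ?thesis by (rule that)
qed

lemma square_dvd_minor_power_mult_pdet:
  fixes u :: "nat \<Rightarrow> nat \<Rightarrow> 'b::comm_ring_1"
  assumes bordered_dvd: "\<And>a b. a < p \<Longrightarrow> b < p \<Longrightarrow>
      s dvd pdet (Suc q) (\<lambda>a'. u (if a' < q then R a' else J a)) (\<lambda>b'. if b' < q then C b' else I b)"
    and "q + 2 \<le> p"
  shows "s^2 dvd pdet q (\<lambda>a. u (R a)) C ^ p * pdet p (\<lambda>a. u (J a)) I"
proof -
  define \<delta> where "\<delta> = pdet q (\<lambda>a. u (R a)) C"
  define B where "B a c = pdet (Suc q) (\<lambda>a'. u (if a' < q then R a' else J a)) (\<lambda>b'. if b' < q then C b' else c)"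
    for a c
  define Q where "Q a b = (SOME z. B a (I b) = s * z)" for a b
  have Q: "B a (I b) = s * Q a b" if "a < p" "b < p" for a b
    using bordered_dvd[OF that] unfolding Q_def B_def dvd_def by (rule someI_ex)
  have "\<forall>a. \<exists>g. \<forall>c. B a c = \<delta> * u (J a) c + (\<Sum>i<q. g i * u (R i) c)"
  proof
    fix a
    obtain g where "\<And>c. B a c = \<delta> * u (J a) c + (\<Sum>i<q. g i * u (R i) c)"
      unfolding B_def \<delta>_def using bordered_minor_expansion[where u=u and q=q and R=R and j="J a" and C=C] by blast
    thus "\<exists>g. \<forall>c. B a c = \<delta> * u (J a) c + (\<Sum>i<q. g i * u (R i) c)" by blast
  qed
  then obtain \<gamma> where \<gamma>: "\<And>a c. B a c = \<delta> * u (J a) c + (\<Sum>i<q. \<gamma> a i * u (R i) c)"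
    by (auto dest: choice)
  have rows: "(\<Sum>i<q. - \<gamma> a i * u (R i) (I b)) + s * Q a b = \<delta> * u (J a) (I b)" if "a < p" "b < p" for a b
    using \<gamma>[of a "I b"] Q[OF that] by (simp add: sum_negf)
  have "s^2 dvd pdet p (\<lambda>a b. (\<Sum>i<q. - \<gamma> a i * u (R i) (I b)) + s * Q a b) id"
    by (rule square_dvd_pdet_low_rank_add_mult) fact
  also have "pdet p (\<lambda>a b. (\<Sum>i<q. - \<gamma> a i * u (R i) (I b)) + s * Q a b) id = \<delta> ^ p * pdet p (\<lambda>a. u (J a)) I"
    unfolding pdet_reindex_cols[of p "\<lambda>a. u (J a)" I] by (rule pdet_scale_rows) (rule rows)
  finally show ?thesis unfolding \<delta>_def .
qed

lemma ex_sorting_permutation: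
  fixes R :: "nat \<Rightarrow> nat"
  assumes "inj_on R {..<p}"
  shows "\<exists>\<pi>. \<pi> permutes {..<p} \<and> (\<forall>a b. a < b \<and> b < p \<longrightarrow> R (\<pi> a) < R (\<pi> b))"
proof -
  define xs where "xs = map R [0..<p]"
  have "mset (sort xs) = mset xs" by simp
  from permutation_Ex_bij[OF this] obtain f where
    f: "bij_betw f {..<length (sort xs)} {..<length xs}" "\<forall>i<length (sort xs). sort xs ! i = xs ! f i"
    by blast
  have len: "length xs = p" "length (sort xs) = p" unfolding xs_def by auto
  define \<pi> where "\<pi> a = (if a < p then f a else a)" for a
  have "bij_betw \<pi> {..<p} {..<p}"
    using f(1) unfolding len by (rule bij_betw_cong[THEN iffD1, rotated]) (auto simp: \<pi>_def)
  hence perm: "\<pi> permutes {..<p}" by (rule bij_imp_permutes) (auto simp: \<pi>_def)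
  have "distinct xs" unfolding xs_def using assms by (simp add: distinct_map atLeast0LessThan)
  hence sorted: "sorted_wrt (<) (sort xs)" by (simp add: strict_sorted_iff)
  have nth_sort: "sort xs ! a = R (\<pi> a)" if "a < p" for a
  proof -
    have "f a < p" using f(1) that len by (auto simp: bij_betw_def)
    thus ?thesis using f(2) that len by (simp add: \<pi>_def xs_def)
  qed
  have "R (\<pi> a) < R (\<pi> b)" if "a < b" "b < p" for a b
    using sorted_wrt_nth_less[OF sorted, of a b] that len nth_sort[of a] nth_sort[of b] by simp
  thus ?thesis using perm by blast
qed

lemma dvd_pdet_if_dvd_incr_minors:
  fixes M :: "nat \<Rightarrow> nat \<Rightarrow> 'b::comm_ring_1"
  assumes incr_dvd: "\<And>R I. incr p m R \<Longrightarrow> incr p n I \<Longrightarrow> s dvd pdet p (\<lambda>a. M (R a)) I"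
    and R: "\<And>a. a < p \<Longrightarrow> R a < m" and I: "\<And>b. b < p \<Longrightarrow> I b < n"
  shows "s dvd pdet p (\<lambda>a. M (R a)) I"
proof (cases "inj_on R {..<p} \<and> inj_on I {..<p}")
  case False
  then consider (rows) a a' where "a < p" "a' < p" "a \<noteq> a'" "R a = R a'"
    | (cols) b b' where "b < p" "b' < p" "b \<noteq> b'" "I b = I b'"
    unfolding inj_on_def by auto
  hence "pdet p (\<lambda>a. M (R a)) I = 0"
  proof cases
    case rows
    thus ?thesis by (rule pdet_identical_rows[where R=R and M=M])
  next
    case cols
    thus ?thesis by (rule pdet_identical_cols)
  qed
  thus ?thesis by simp
next
  case True
  then obtain \<pi> \<rho> where \<pi>: "\<pi> permutes {..<p}" "\<forall>a b. a < b \<and> b < p \<longrightarrow> R (\<pi> a) < R (\<pi> b)"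
    and \<rho>: "\<rho> permutes {..<p}" "\<forall>a b. a < b \<and> b < p \<longrightarrow> I (\<rho> a) < I (\<rho> b)"
    using ex_sorting_permutation[of R p] ex_sorting_permutation[of I p] by auto
  define e :: 'b where "e = of_int (sign \<pi> * sign \<rho>)"
  have "a < p \<Longrightarrow> \<pi> a < p" "a < p \<Longrightarrow> \<rho> a < p" for a
    using permutes_in_image[OF \<pi>(1)] permutes_in_image[OF \<rho>(1)] by auto
  hence "incr p m (\<lambda>a. R (\<pi> a))" "incr p n (\<lambda>a. I (\<rho> a))"
    unfolding incr_def using \<pi>(2) \<rho>(2) R I by auto
  hence "s dvd pdet p (\<lambda>a. M (R (\<pi> a))) (\<lambda>a. I (\<rho> a))" by (rule incr_dvd)
  also have "pdet p (\<lambda>a. M (R (\<pi> a))) (\<lambda>a. I (\<rho> a)) = e * pdet p (\<lambda>a. M (R a)) I"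
    by (simp add: e_def pdet_permute_rows[OF \<pi>(1), of "\<lambda>a. M (R a)"] pdet_permute_cols[OF \<rho>(1)])
  finally have "s dvd e * (e * pdet p (\<lambda>a. M (R a)) I)" by (rule dvd_mult)
  moreover have "e * e = 1" by (simp add: e_def sign_def)
  ultimately show ?thesis by (simp add: mult.assoc[symmetric])
qed

lemma monom_1_dvd_mult_cancel:
  fixes e D :: "'a::field poly"
  assumes "poly e 0 \<noteq> 0" "monom 1 N dvd e * D"
  shows "monom 1 N dvd D"
proof (cases "D = 0")
  case False
  have "e * D \<noteq> 0" using assms(1) False by auto
  hence "N \<le> order 0 (e * D)" using assms(2) by (simp add: monom_1_dvd_iff)
  also have "order 0 (e * D) = order 0 D" using \<open>e * D \<noteq> 0\<close> by (simp add: order_mult order_0I[OF assms(1)])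
  finally show ?thesis using False by (simp add: monom_1_dvd_iff)
qed simp

lemma poly_pdet: "poly (pdet p M I) x = pdet p (\<lambda>a i. poly (M a i) x) I"
  unfolding pdet_def by (simp add: poly_sum poly_prod)

lemma poly_upoly_0: "0 < k \<Longrightarrow> poly (upoly k U j i) 0 = U j 0 i"
  unfolding upoly_def poly_sum poly_monom
  by (cases k) (simp_all add: sum.lessThan_Suc_shift del: sum.lessThan_Suc)

lemma prod_monom: "(\<Prod>a\<in>A. monom (c a) (d a)) = monom (\<Prod>a\<in>A. c a) (\<Sum>a\<in>A. d a)"
  by (induction A rule: infinite_finite_induct) (auto simp: mult_monom)

lemma coeff_prod_upoly:
  "coeff (\<Prod>a<p. upoly k U (J a) (C a)) w = (\<Sum>l\<in>tuples p k w. \<Prod>a<p. U (J a) (l a) (C a))"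
proof -
  let ?PI = "PiE {..<p} (\<lambda>_. {..<k})"
  let ?F = "\<lambda>g. \<Prod>a<p. U (J a) (g a) (C a)"
  have "(\<Prod>a<p. upoly k U (J a) (C a)) = (\<Sum>g\<in>?PI. \<Prod>a<p. monom (U (J a) (g a) (C a)) (g a))"
    unfolding upoly_def by (rule prod_sum_PiE) auto
  also have "\<dots> = (\<Sum>g\<in>?PI. monom (?F g) (\<Sum>a<p. g a))"
    by (simp add: prod_monom)
  finally have "coeff (\<Prod>a<p. upoly k U (J a) (C a)) w = (\<Sum>g\<in>?PI. if (\<Sum>a<p. g a) = w then ?F g else 0)"
    by (simp add: coeff_sum coeff_monom)
  also have "\<dots> = (\<Sum>g\<in>{g \<in> ?PI. (\<Sum>a<p. g a) = w}. ?F g)"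
    by (rule sum.inter_filter[symmetric]) (simp add: finite_PiE)
  also have "\<dots> = (\<Sum>l\<in>tuples p k w. ?F l)"
  proof (rule sum.reindex_bij_witness[of _ "\<lambda>l. restrict l {..<p}" "\<lambda>g a. if a < p then g a else 0"])
    fix l assume "l \<in> tuples p k w"
    thus "(\<lambda>a. if a < p then restrict l {..<p} a else 0) = l" "restrict l {..<p} \<in> {g \<in> ?PI. (\<Sum>a<p. g a) = w}"
      unfolding tuples_def by (auto intro!: ext)
  next
    fix g assume g: "g \<in> {g \<in> ?PI. (\<Sum>a<p. g a) = w}"
    thus "restrict (\<lambda>a. if a < p then g a else 0) {..<p} = g"
      by (auto intro!: ext simp: PiE_def extensional_def)
    show "(\<lambda>a. if a < p then g a else 0) \<in> tuples p k w"
      using g unfolding tuples_def by (auto simp: PiE_def Pi_def)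
    show "?F (\<lambda>a. if a < p then g a else 0) = ?F g" by simp
  qed
  finally show ?thesis .
qed

lemma wedge_sum_eq_coeff_pdet:
  "wedge_sum p k U J w I = coeff (pdet p (\<lambda>a i. upoly k U (J a) i) I) w"
proof -
  have "wedge_sum p k U J w I =
      (\<Sum>\<sigma> | \<sigma> permutes {..<p}. of_int (sign \<sigma>) * (\<Sum>l\<in>tuples p k w. \<Prod>a<p. U (J a) (l a) (I (\<sigma> a))))"
    unfolding wedge_sum_def wedge_def pdet_def by (subst sum.swap) (simp add: sum_distrib_left)
  also have "\<dots> = coeff (pdet p (\<lambda>a i. upoly k U (J a) i) I) w"
    by (simp add: pdet_def coeff_sum of_int_poly coeff_prod_upoly)
  finally show ?thesis .
qed

theorem wedge_sum_eq_0_if_constant_minor_nonzero: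
  fixes U :: "nat \<Rightarrow> nat \<Rightarrow> nat \<Rightarrow> 'a::field"
  assumes vanish: "wedges_vanish (Suc q) m n k U"
    and R0: "\<And>a. a < q \<Longrightarrow> R0 a < m" and I0: "\<And>b. b < q \<Longrightarrow> I0 b < n"
    and nonzero: "wedge q (\<lambda>a i. U (R0 a) 0 i) I0 \<noteq> 0"
    and J: "\<And>a. a < q + 2 \<Longrightarrow> J a < m" and I: "\<And>b. b < q + 2 \<Longrightarrow> I b < n"
    and "w < 2 * k"
  shows "wedge_sum (q + 2) k U J w I = 0"
proof -
  define u where "u = upoly k U"
  define \<delta> where "\<delta> = pdet q (\<lambda>a. u (R0 a)) I0"
  have "monom 1 k dvd pdet (Suc q) (\<lambda>a. u (R a)) C" if "incr (Suc q) m R" "incr (Suc q) n C" for R C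
    using vanish that unfolding wedges_vanish_def u_def monom_1_dvd_iff' by blast
  hence "monom 1 k dvd pdet (Suc q) (\<lambda>a'. u (if a' < q then R0 a' else J a)) (\<lambda>b'. if b' < q then I0 b' else I b)"
    if "a < q + 2" "b < q + 2" for a b
    by (rule dvd_pdet_if_dvd_incr_minors) (use that R0 I0 J I in auto)
  hence "(monom 1 k)^2 dvd \<delta> ^ (q + 2) * pdet (q + 2) (\<lambda>a. u (J a)) I"
    unfolding \<delta>_def by (rule square_dvd_minor_power_mult_pdet[OF _ order.refl])
  hence dvd: "monom 1 (2 * k) dvd \<delta> ^ (q + 2) * pdet (q + 2) (\<lambda>a. u (J a)) I"
    by (simp add: power2_eq_square mult_monom mult_2)
  have "poly \<delta> 0 = wedge q (\<lambda>a i. U (R0 a) 0 i) I0"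
    using \<open>w < 2 * k\<close> by (simp add: \<delta>_def u_def poly_pdet poly_upoly_0 wedge_def)
  hence "poly (\<delta> ^ (q + 2)) 0 \<noteq> 0"
    using nonzero by (simp add: poly_power)
  from this dvd have "monom 1 (2 * k) dvd pdet (q + 2) (\<lambda>a. u (J a)) I"
    by (rule monom_1_dvd_mult_cancel)
  thus ?thesis using \<open>w < 2 * k\<close> by (simp add: monom_1_dvd_iff' wedge_sum_eq_coeff_pdet u_def)
qed

lemma wedge_sum_3_eq_0_if_entry_nonzero:
  fixes U :: "nat \<Rightarrow> nat \<Rightarrow> nat \<Rightarrow> 'a::field"
  assumes "wedges_vanish 2 m n k U" "i0 < m" "j0 < n" "U i0 0 j0 \<noteq> 0"
    and "incr 3 m J" "incr 3 n I" "w < 2 * k"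
  shows "wedge_sum 3 k U J w I = 0"
proof -
  have "wedge_sum (1 + 2) k U J w I = 0"
    using assms incr_less[OF \<open>incr 3 m J\<close>] incr_less[OF \<open>incr 3 n I\<close>]
    by (intro wedge_sum_eq_0_if_constant_minor_nonzero[of 1 m n k U "\<lambda>_. i0" "\<lambda>_. j0"])
      (simp_all add: numeral_2_eq_2 wedge_def pdet_1[unfolded One_nat_def])
  thus ?thesis by (simp add: numeral_3_eq_3)
qed

lemma polyfun_sum:
  assumes "\<And>i. i \<in> A \<Longrightarrow> f i \<in> polyfun"
  shows "(\<lambda>x. \<Sum>i\<in>A. f i x) \<in> polyfun"
  using assms
proof (induction A rule: infinite_finite_induct)
  case (insert a A)
  thus ?case using polyfun.pf_add[of "f a" "\<lambda>x. \<Sum>i\<in>A. f i x"] by simp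
qed (simp_all add: polyfun.pf_const)

lemma polyfun_prod:
  assumes "\<And>i. i \<in> A \<Longrightarrow> f i \<in> polyfun"
  shows "(\<lambda>x. \<Prod>i\<in>A. f i x) \<in> polyfun"
  using assms
proof (induction A rule: infinite_finite_induct)
  case (insert a A)
  thus ?case using polyfun.pf_mult[of "f a" "\<lambda>x. \<Prod>i\<in>A. f i x"] by simp
qed (simp_all add: polyfun.pf_const)

lemma polyfun_wedge_sum: "(\<lambda>x. wedge_sum p k (\<lambda>i l j. x i j l) J w I) \<in> polyfun"
  unfolding wedge_sum_def wedge_def pdet_def
  by (intro polyfun_sum polyfun_prod polyfun.pf_mult polyfun.pf_const polyfun.pf_var)

lemma wedge_sum_3_eq_0_on_Z0:
  fixes x :: "nat \<Rightarrow> nat \<Rightarrow> nat \<Rightarrow> 'a::field"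
  assumes "x \<in> Z0 m n k" "incr 3 m J" "incr 3 n I" "w < 2 * k"
  shows "wedge_sum 3 k (\<lambda>i l j. x i j l) J w I = 0"
proof -
  let ?S = "{y \<in> Zset m n 2 k. \<exists>i<m. \<exists>j<n. y i j 0 \<noteq> 0}"
  have vanish_on_S: "wedge_sum 3 k (\<lambda>i l j. y i j l) J w I = 0" if "y \<in> ?S" for y
  proof -
    from that obtain i0 j0 where "i0 < m" "j0 < n" "y i0 j0 0 \<noteq> 0" "wedges_vanish 2 m n k (\<lambda>i l j. y i j l)"
      by (auto simp: Zset_def)
    thus ?thesis using assms(2-4) by (intro wedge_sum_3_eq_0_if_entry_nonzero[of m n k _ i0 j0]) simp_all
  qed
  have "\<forall>f\<in>polyfun. (\<forall>y\<in>?S. f y = 0) \<longrightarrow> f x = 0"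
    using assms(1) unfolding Z0_def zariski_closure_def by blast
  from this[rule_format, OF polyfun_wedge_sum vanish_on_S] show ?thesis .
qed

theorem corollary4p4:
  assumes "alg_closed TYPE('a::field)"
  shows
   "(\<forall>r m n k (U :: nat \<Rightarrow> nat \<Rightarrow> nat \<Rightarrow> 'a).
       2 \<le> r \<and> r \<le> m \<and> m \<le> n \<and> 1 \<le> k \<and>
       wedges_vanish r m n k U \<and>
       (\<exists>I. incr (r - 1) n I \<and> wedge (r - 1) (\<lambda>a i. U a 0 i) I \<noteq> 0)
       \<longrightarrow> (\<forall>w < 2 * k. \<forall>J. incr (r + 1) m J \<longrightarrow>
              (\<forall>I. incr (r + 1) n I \<longrightarrow> wedge_sum (r + 1) k U J w I = 0)))
    \<and>
    (\<forall>m n k (x :: nat \<Rightarrow> nat \<Rightarrow> nat \<Rightarrow> 'a).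
       3 \<le> m \<and> m \<le> n \<and> 1 \<le> k \<and> x \<in> Z0 m n k
       \<longrightarrow> (\<forall>w < 2 * k. \<forall>J. incr 3 m J \<longrightarrow>
              (\<forall>I. incr 3 n I \<longrightarrow> wedge_sum 3 k (\<lambda>i l j. x i j l) J w I = 0)))"
proof (intro conjI allI impI)
  fix r m n k w J I and U :: "nat \<Rightarrow> nat \<Rightarrow> nat \<Rightarrow> 'a"
  assume hyps: "2 \<le> r \<and> r \<le> m \<and> m \<le> n \<and> 1 \<le> k \<and> wedges_vanish r m n k U \<and>
       (\<exists>I. incr (r - 1) n I \<and> wedge (r - 1) (\<lambda>a i. U a 0 i) I \<noteq> 0)"
    and "w < 2 * k" "incr (r + 1) m J" "incr (r + 1) n I"
  obtain q where r: "r = Suc q" using hyps by (cases r) auto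
  from hyps obtain I0 where "incr q n I0" "wedge q (\<lambda>a i. U a 0 i) I0 \<noteq> 0" unfolding r by auto
  hence "wedge_sum (q + 2) k U J w I = 0"
    using hyps \<open>w < 2 * k\<close> \<open>incr (r + 1) m J\<close> \<open>incr (r + 1) n I\<close> unfolding r
    by (intro wedge_sum_eq_0_if_constant_minor_nonzero[of q m n k U "\<lambda>a. a" I0])
      (simp_all add: incr_less)
  thus "wedge_sum (r + 1) k U J w I = 0" by (simp add: r)
next
  fix m n k w J I and x :: "nat \<Rightarrow> nat \<Rightarrow> nat \<Rightarrow> 'a"
  assume "3 \<le> m \<and> m \<le> n \<and> 1 \<le> k \<and> x \<in> Z0 m n k"
    and w: "w < 2 * k" and J: "incr 3 m J" and I: "incr 3 n I"
  hence "x \<in> Z0 m n k" by simp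
  from this J I w show "wedge_sum 3 k (\<lambda>i l j. x i j l) J w I = 0" by (rule wedge_sum_3_eq_0_on_Z0)
qed

end
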